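(* Let $A=(0,0)$, $B=(1,0)$, $C=(1,1)$, $D=(0,1)$ be the vertices of the unit square in $\mathbb{R}^2$. There is no point $P$ lying on a midline of this square, that is, no point of the form $P=(1/2,\,y)$ with $0\le y\le 1$ or $P=(x,\,1/2)$ with $0\le x\le 1$, such that the four Euclidean distances $|PA|$, $|PB|$, $|PC|$, $|PD|$ are all rational numbers.
   Context: The midlines of the square are the segments joining midpoints of opposite sides. Distances are ordinary Euclidean distances. *)

theory Defs
  imports "HOL-Analysis.Analysis"
begin

end

theory Submission
  imports Defs "HOL-Computational_Algebra.Nth_Powers"
begin

text \<open>For P = (1/2, t) put d = 2t - 1. Then 4|PA|^2 = 1 + (d+1)^2 and 4|PD|^2 = 1 + (d-1)^2, so
  d = |PA|^2 - |PD|^2 and (4|PA||PD|)^2 = d^4 + 4. If both distances are rational, so is d, and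
  clearing denominators in d = m/n gives m^4 + 4n^4 = k^2 in natural numbers. For d \<noteq> 0 this is
  impossible by Fermat's infinite descent; for d = 0 it would make 2|PA| = \<surd>2 rational.

  The descent: if x is odd and coprime to y in x^4 + 4y^4 = z^2, then z = x^2 + 2R with coprime
  factors R (x^2 + R) = y^4, hence x^2 + d^4 = c^4 with d = 2e even; factoring again gives
  c^2 = h^4 + 4g^4 with c < z.\<close>

lemma Rats_power_eq_of_nat_imp_is_nth_power:
  fixes r :: real
  assumes "r \<in> \<rat>" "r ^ n = of_nat N" "n > 0"
  shows "is_nth_power n N"
proof -
  obtain m k :: nat where mk: "k \<noteq> 0" "\<bar>r\<bar> = real m / real k" "coprime m k"
    using Rats_abs_nat_div_natE[OF assms(1)] by metis
  have "real N = \<bar>r\<bar> ^ n"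
    by (metis assms(2) of_nat_0_le_iff abs_of_nonneg power_abs)
  also have "\<dots> = real m ^ n / real k ^ n"
    using mk(2) by (simp add: power_divide)
  finally have "N * k ^ n = m ^ n"
    using mk(1) by (simp add: field_simps flip: of_nat_power of_nat_mult)
  then have "k dvd m"
    using assms(3) by (metis dvd_triv_right pow_divides_pow_iff)
  then have "k = 1"
    using mk(3) by (metis coprime_common_divisor_nat dvd_refl)
  with \<open>N * k ^ n = m ^ n\<close> show ?thesis
    by (auto intro: is_nth_powerI)
qed

lemma coprime_mult_eq_nth_powerE:
  fixes a b k :: nat
  assumes "coprime a b" "a * b = k ^ n" "a > 0" "b > 0"
  obtains r s where "a = r ^ n" "b = s ^ n"
  using is_nth_power_mult_coprime_natD[of a b n] assms by (metis is_nth_powerE is_nth_power_nth_power)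

lemma coprime_numeral_four_if_odd:
  fixes b :: nat
  assumes "odd b"
  shows "coprime 4 b"
proof -
  have "coprime (2 ^ 2) b"
    using assms by (simp only: coprime_power_left_iff) (simp add: coprime_commute odd_iff_mod_2_eq_one)
  then show ?thesis by simp
qed

lemma odd_square_add_odd_square_not_square:
  fixes a b c :: nat
  assumes "odd a" "odd b"
  shows "a^2 + b^2 \<noteq> c^2"
proof
  assume eq: "a^2 + b^2 = c^2"
  obtain i j where "a = 2*i + 1" "b = 2*j + 1" using assms by (metis oddE)
  then have ab: "a^2 + b^2 = 4*(i^2 + i + j^2 + j) + 2"
    by (simp add: power2_eq_square algebra_simps)
  then have "even c" using eq by (metis even_add even_mult_iff even_numeral even_power)
  then obtain k where "c = 2*k" by blast
  then show False using eq ab by (simp add: power2_eq_square) presburger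
qed

lemma odd_square_add_four_mult_eq_squareE:
  fixes u N w :: nat
  assumes "odd u" "coprime u N" "N > 0" "u^2 + 4*N = w^2"
  obtains R where "R > 0" "w = u + 2*R" "R * (u + R) = N" "coprime R (u + R)"
proof -
  have "u^2 < w^2" using assms(3,4) by linarith
  then have "u < w" by (simp add: power_less_imp_less_base)
  then obtain k where k: "w = u + k" by (metis less_imp_add_positive)
  have "odd w" using assms(1,4) by (metis even_add even_mult_iff even_numeral even_power pos2)
  then obtain R where R: "k = 2*R" using k assms(1) by (metis even_add evenE)
  have "4 * (R * (u + R)) = 4 * N"
    using assms(4) k R by (simp add: power2_eq_square algebra_simps)
  then have RN: "R * (u + R) = N" by simp
  then have "R dvd N" by (metis dvd_triv_left)
  then have "coprime u R" using assms(2) by (meson coprime_divisors dvd_refl)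
  then have "coprime R (u + R)"
    by (simp add: coprime_iff_gcd_eq_1 gcd.commute add.commute[of u])
  moreover have "R > 0" using RN assms(3) by (cases R) auto
  ultimately show ?thesis using that k R RN by blast
qed

lemma coprime_mult_eq_four_mult_fourth_powerE:
  fixes a b e :: nat
  assumes "coprime a b" "a * b = 4 * e^4" "e > 0"
  obtains g h where "g > 0" "h > 0" "a + b = h^4 + 4 * g^4"
proof -
  have split: "\<exists>g h. g > 0 \<and> h > 0 \<and> a + b = h^4 + 4 * g^4"
    if "even a" "coprime a b" "a * b = 4 * e^4" for a b
  proof -
    have "odd b" using that(1,2) by (metis coprime_common_divisor_nat even_numeral odd_one)
    then have "4 dvd a" using that(3) coprime_numeral_four_if_odd
      by (metis coprime_dvd_mult_left_iff dvd_triv_left)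
    then obtain a' where a': "a = 4 * a'" by blast
    have "a' * b = e^4" "coprime a' b" using that(2,3) a' by auto
    moreover have "a' * b > 0" using \<open>a' * b = e^4\<close> assms(3) by simp
    then have "a' > 0" "b > 0" by auto
    ultimately obtain g h where "a' = g^4" "b = h^4"
      by (metis coprime_mult_eq_nth_powerE)
    then show ?thesis using a' \<open>a' > 0\<close> \<open>b > 0\<close> by (intro exI[of _ g] exI[of _ h]) auto
  qed
  have "\<exists>g h. g > 0 \<and> h > 0 \<and> a + b = h^4 + 4 * g^4"
  proof (cases "even a")
    case True
    then show ?thesis using split assms(1,2) by blast
  next
    case False
    then have "even b" using assms(2) by (metis even_mult_iff even_numeral)
    then have "\<exists>g h. g > 0 \<and> h > 0 \<and> b + a = h^4 + 4 * g^4"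
      using split[of b a] assms(1,2) by (simp add: coprime_commute mult.commute)
    then show ?thesis by (simp add: add.commute)
  qed
  then show ?thesis using that by blast
qed

lemma quartic_odd_coprime_descent_to_pythagorean:
  fixes x y z :: nat
  assumes "odd x" "coprime x y" "y > 0" "x^4 + 4*y^4 = z^2"
  obtains c d where "d > 0" "even d" "coprime x d" "x^2 + (d^2)^2 = (c^2)^2" "c < z"
proof -
  have "(x^2)^2 + 4*y^4 = z^2" using assms(4) by (simp flip: power_mult)
  moreover have "coprime (x^2) (y^4)" using assms(2) by simp
  ultimately obtain R where R: "R > 0" "z = x^2 + 2*R" "R * (x^2 + R) = y^4" "coprime R (x^2 + R)"
    using odd_square_add_four_mult_eq_squareE[of "x^2" "y^4" z] assms(1,3) by auto
  then obtain d c where dc: "R = d^4" "x^2 + R = c^4"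
    by (metis coprime_mult_eq_nth_powerE add_gr_0)
  have "d > 0" using R(1) dc(1) by simp
  have "c > 0" using R(1) dc(2) by (cases c) auto
  have pyth: "x^2 + (d^2)^2 = (c^2)^2" using dc by (simp flip: power_mult)
  have "coprime R (x^2)" using R(4) by (simp add: coprime_iff_gcd_eq_1 add.commute[of "x^2"])
  then have "coprime x d" using dc(1) by (simp add: coprime_commute)
  moreover have "even d"
    using odd_square_add_odd_square_not_square[of x "d^2" "c^2"] assms(1) pyth by auto
  moreover have "c < z"
  proof -
    have "c \<le> c^4" using \<open>c > 0\<close> by (simp add: self_le_power)
    moreover have "z = c^4 + d^4" using R(2) dc by simp
    moreover have "d^4 > 0" using \<open>d > 0\<close> by simp
    ultimately show ?thesis by linarith
  qed
  ultimately show ?thesis using that \<open>d > 0\<close> pyth by blast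
qed

lemma pythagorean_even_fourth_power_descent_to_quartic:
  fixes x c d :: nat
  assumes "odd x" "coprime x d" "d > 0" "even d" "x^2 + (d^2)^2 = (c^2)^2"
  obtains g h where "g > 0" "h > 0" "c^2 = h^4 + 4 * g^4"
proof -
  obtain e where e: "d = 2*e" using assms(4) by blast
  have "e > 0" using assms(3) e by simp
  have "x^2 + 4*(4*e^4) = (c^2)^2" using assms(5) e by (simp add: power_mult_distrib flip: power_mult)
  moreover have "coprime x (4*e^4)"
    using assms(1,2) e by (simp add: coprime_commute[of x] coprime_numeral_four_if_odd)
  ultimately obtain R where R: "c^2 = x + 2*R" "R * (x + R) = 4*e^4" "coprime R (x + R)"
    using odd_square_add_four_mult_eq_squareE[of x "4*e^4" "c^2"] assms(1) \<open>e > 0\<close> by auto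
  then obtain g h where "g > 0" "h > 0" "R + (x + R) = h^4 + 4 * g^4"
    using coprime_mult_eq_four_mult_fourth_powerE \<open>e > 0\<close> by metis
  then show ?thesis using that R(1) by simp
qed

definition quartic_solution :: "nat \<Rightarrow> nat \<Rightarrow> nat \<Rightarrow> bool" where
  "quartic_solution x y z \<longleftrightarrow> x > 0 \<and> y > 0 \<and> x^4 + 4 * y^4 = z^2"

lemma quartic_solution_common_factor_descent:
  assumes sol: "quartic_solution x y z" and "g > 1" "g dvd x" "g dvd y"
  shows "\<exists>x' y' z'. z' < z \<and> quartic_solution x' y' z'"
proof -
  obtain x' y' where xy: "x = g * x'" "y = g * y'" using assms(3,4) by (metis dvdE)
  have eq: "z^2 = (g^2)^2 * (x'^4 + 4 * y'^4)"
    using sol xy by (simp add: quartic_solution_def algebra_simps flip: power_mult)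
  then have "g^2 dvd z" by (metis dvd_triv_left pow_divides_pow_iff zero_less_numeral)
  then obtain w where w: "z = g^2 * w" by blast
  have "x'^4 + 4 * y'^4 = w^2" using eq w assms(2) by (simp add: power_mult_distrib)
  moreover have "x' > 0" "y' > 0" using sol xy by (auto simp: quartic_solution_def)
  moreover have "w < z"
  proof -
    have "w > 0" using \<open>x' > 0\<close> \<open>x'^4 + 4 * y'^4 = w^2\<close> by (cases w) auto
    moreover have "g^2 > 1" using assms(2) by (metis one_less_power zero_less_numeral)
    ultimately show ?thesis using w by simp
  qed
  ultimately have "quartic_solution x' y' w" by (simp add: quartic_solution_def)
  then show ?thesis using \<open>w < z\<close> by blast
qed

lemma quartic_solution_even_descent:
  assumes sol: "quartic_solution x y z" and "even x"
  shows "\<exists>x' y' z'. z' < z \<and> quartic_solution x' y' z'"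
proof -
  obtain x' where x': "x = 2 * x'" using assms(2) by blast
  have eq: "z^2 = 4 * (y^4 + 4 * x'^4)" using sol x' by (simp add: quartic_solution_def)
  then have "even (z^2)" by simp
  then have "even z" by simp
  then obtain w where w: "z = 2 * w" by blast
  have "y^4 + 4 * x'^4 = w^2" using eq w by (simp add: power_mult_distrib)
  moreover have "x' > 0" using sol x' by (simp add: quartic_solution_def)
  moreover have "w > 0" using \<open>y^4 + 4 * x'^4 = w^2\<close> \<open>x' > 0\<close> by (cases "w = 0") auto
  then have "w < z" using w by simp
  ultimately have "quartic_solution y x' w" using sol by (simp add: quartic_solution_def)
  then show ?thesis using \<open>w < z\<close> by blast
qed

lemma quartic_solution_descent:
  assumes sol: "quartic_solution x y z"
  shows "\<exists>x' y' z'. z' < z \<and> quartic_solution x' y' z'"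
proof (cases "coprime x y")
  case False
  have "gcd x y \<noteq> 1" using False by (simp add: coprime_iff_gcd_eq_1)
  moreover have "gcd x y > 0" using sol by (simp add: quartic_solution_def)
  ultimately have "gcd x y > 1" by linarith
  then show ?thesis using quartic_solution_common_factor_descent[OF sol] by blast
next
  case True
  show ?thesis
  proof (cases "even x")
    case True
    then show ?thesis using quartic_solution_even_descent[OF sol] by blast
  next
    case False
    obtain c d where "d > 0" "even d" "coprime x d" "x^2 + (d^2)^2 = (c^2)^2" "c < z"
      using quartic_odd_coprime_descent_to_pythagorean False \<open>coprime x y\<close> sol
      unfolding quartic_solution_def by metis
    moreover obtain g h where "g > 0" "h > 0" "c^2 = h^4 + 4 * g^4"
      using pythagorean_even_fourth_power_descent_to_quartic False calculation by metis
    ultimately show ?thesis unfolding quartic_solution_def by metis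
  qed
qed

lemma not_quartic_solution: "\<not> quartic_solution x y z"
proof (induction z arbitrary: x y rule: less_induct)
  case (less z)
  then show ?case using quartic_solution_descent by blast
qed

lemma Rats_square_neq_fourth_power_add_four:
  fixes d e :: real
  assumes "d \<in> \<rat>" "e \<in> \<rat>" "d \<noteq> 0"
  shows "e^2 \<noteq> d^4 + 4"
proof
  assume eq: "e^2 = d^4 + 4"
  obtain m n :: nat where mn: "n \<noteq> 0" "\<bar>d\<bar> = real m / real n"
    using Rats_abs_nat_div_natE[OF assms(1)] by metis
  have "m > 0" using mn(2) assms(3) by (cases m) auto
  have "d^4 = real m ^ 4 / real n ^ 4"
    using mn(2) by (metis power_divide power_even_abs even_numeral)
  then have "(e * real n ^ 2)^2 = of_nat (m^4 + 4 * n^4)"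
    using eq mn(1) by (simp add: field_simps flip: power_mult)
  moreover have "e * real n ^ 2 \<in> \<rat>" using assms(2) by simp
  ultimately obtain k where "m^4 + 4 * n^4 = k^2"
    using Rats_power_eq_of_nat_imp_is_nth_power[of _ 2] by (metis is_nth_powerE zero_less_numeral)
  then have "quartic_solution m n k" using \<open>m > 0\<close> mn(1) by (simp add: quartic_solution_def)
  then show False using not_quartic_solution by blast
qed

lemma midline_dists_not_both_Rats:
  fixes t :: real
  assumes "dist (1/2 :: real, t) (0, 0) \<in> \<rat>" "dist (1/2 :: real, t) (0, 1) \<in> \<rat>"
  shows False
proof -
  define a where "a = dist (1/2 :: real, t) (0, 0)"
  define b where "b = dist (1/2 :: real, t) (0, 1)"
  define d where "d = 2*t - 1"
  have "a^2 = (1/2)^2 + t^2" "b^2 = (1/2)^2 + (t - 1)^2"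
    by (simp_all add: a_def b_def dist_Pair_Pair dist_real_def)
  then have a2: "4 * a^2 = 1 + (d + 1)^2" and b2: "4 * b^2 = 1 + (d - 1)^2"
    by (simp_all add: d_def power2_eq_square algebra_simps)
  have "d = a^2 - b^2" using a2 b2 by (simp add: power2_eq_square algebra_simps)
  then have "d \<in> \<rat>" using assms by (simp add: a_def b_def)
  have "(4*a*b)^2 = (4 * a^2) * (4 * b^2)" by (simp add: power2_eq_square)
  also have "\<dots> = (1 + (d + 1)^2) * (1 + (d - 1)^2)" using a2 b2 by simp
  also have "\<dots> = d^4 + 4" by (simp add: power2_eq_square power4_eq_xxxx algebra_simps)
  finally have ab: "(4*a*b)^2 = d^4 + 4" .
  show False
  proof (cases "d = 0")
    case True
    then have "(2*a)^2 = of_nat (2 ^ 1)" using a2 by (simp add: power_mult_distrib)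
    moreover have "2*a \<in> \<rat>" using assms(1) by (simp add: a_def)
    ultimately have "is_nth_power 2 (2 ^ 1 :: nat)"
      by (intro Rats_power_eq_of_nat_imp_is_nth_power[of "2*a"]) simp_all
    then show False using is_nth_power_prime_power_nat_iff[of 2 2 1] by simp
  next
    case False
    moreover have "4*a*b \<in> \<rat>" using assms by (simp add: a_def b_def)
    ultimately show False
      using Rats_square_neq_fourth_power_add_four \<open>d \<in> \<rat>\<close> ab by blast
  qed
qed

theorem theorem2:
  fixes P :: "real \<times> real"
  assumes "(fst P = 1/2 \<and> 0 \<le> snd P \<and> snd P \<le> 1) \<or> (snd P = 1/2 \<and> 0 \<le> fst P \<and> fst P \<le> 1)"
  shows "\<not> (dist P (0,0) \<in> \<rat> \<and> dist P (1,0) \<in> \<rat> \<and> dist P (1,1) \<in> \<rat> \<and> dist P (0,1) \<in> \<rat>)"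
proof
  assume rat: "dist P (0,0) \<in> \<rat> \<and> dist P (1,0) \<in> \<rat> \<and> dist P (1,1) \<in> \<rat> \<and> dist P (0,1) \<in> \<rat>"
  obtain p q where P: "P = (p, q)" by (cases P)
  from assms show False
  proof
    assume "fst P = 1/2 \<and> 0 \<le> snd P \<and> snd P \<le> 1"
    then have "P = (1/2, q)" using P by simp
    then show False using rat midline_dists_not_both_Rats[of q] by simp
  next
    assume "snd P = 1/2 \<and> 0 \<le> fst P \<and> fst P \<le> 1"
    then have "P = (p, 1/2)" using P by simp
    moreover have "dist (p, 1/2 :: real) (0, 0) = dist (1/2 :: real, p) (0, 0)"
      and "dist (p, 1/2 :: real) (1, 0) = dist (1/2 :: real, p) (0, 1)"
      by (simp_all add: dist_Pair_Pair dist_real_def add.commute abs_minus_commute)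
    ultimately show False using rat midline_dists_not_both_Rats[of p] by simp
  qed
qed

end
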